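(* Let $V$ be a toroidal vertex algebra and let $I$ be an ideal of $V$. Define $$K(I)=\{v\in V\mid v_{m_0,\mathbf{m}}V\subset I\ \text{for all }(m_0,\mathbf{m})\in\mathbb{Z}\times\mathbb{Z}^r\},\qquad \mathcal{R}(I)=I\cap V^0,$$ and for an ideal $I^0$ of $V^0$ define $\mathcal{G}(I^0)=\mathrm{span}\{a_{m_0,\mathbf{m}}v\mid a\in I^0, v\in V,(m_0,\mathbf{m})\in\mathbb{Z}\times\mathbb{Z}^r\}$ (an ideal of $V$). Then $$K(\mathcal{G}(\mathcal{R}(I)))=K(I)\quad\text{and}\quad \mathcal{R}(I)=\mathcal{R}(K(I)).$$
   Context: Fix a positive integer $r$. Write $\mathbf{x}=(x_1,\dots,x_r)$, $\mathbf{x}^{\mathbf{m}}=x_1^{m_1}\cdots x_r^{m_r}$ (similarly for other variables), $\mathbf{z}\mathbf{y}=(z_1y_1,\dots,z_ry_r)$. For a vector space $W$ put $\mathcal{E}(W,r)=\mathrm{Hom}(W,W[[x_1^{\pm1},\dots,x_r^{\pm1}]]((x_0)))$. A toroidal vertex algebra is a vector space $V$ with a linear map $Y(\cdot;x_0,\mathbf{x}):V\to\mathcal{E}(V,r)$, $v\mapsto\sum_{(m_0,\mathbf{m})\in\mathbb{Z}\times\mathbb{Z}^r}v_{m_0,\mathbf{m}}x_0^{-m_0-1}\mathbf{x}^{-\mathbf{m}}$, and a vector $\mathbf{1}$ with $Y(\mathbf{1};x_0,\mathbf{x})v=v$, $Y(v;x_0,\mathbf{x})\mathbf{1}\in V[[x_0,x_1^{\pm1},\dots,x_r^{\pm1}]]$,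 and the Jacobi identity $$z_0^{-1}\delta\!\left(\tfrac{x_0-y_0}{z_0}\right)Y(u;x_0,\mathbf{z}\mathbf{y})Y(v;y_0,\mathbf{y})-z_0^{-1}\delta\!\left(\tfrac{y_0-x_0}{-z_0}\right)Y(v;y_0,\mathbf{y})Y(u;x_0,\mathbf{z}\mathbf{y})=y_0^{-1}\delta\!\left(\tfrac{x_0-z_0}{y_0}\right)Y(Y(u;z_0,\mathbf{z})v;y_0,\mathbf{y})$$ for all $u,v$, where $Y(u;x_0,\mathbf{z}\mathbf{y})=\sum u_{m_0,\mathbf{m}}x_0^{-m_0-1}\mathbf{z}^{-\mathbf{m}}\mathbf{y}^{-\mathbf{m}}$. An ideal of $V$ is a subspace $I$ with $u_{m_0,\mathbf{m}}v\in I$ whenever $u\in I$ or $v\in I$. $V^0=\mathrm{span}\{v_{m_0,\mathbf{m}}\mathbf{1}\}$ is a toroidal vertex subalgebra; $\mathcal{R}(I)$ is an ideal of $V^0$. *)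

theory Defs
  imports Complex_Main "HOL-Library.Groups_Big_Fun"
begin

text \<open>A toroidal vertex algebra over a field 'k, with underlying vector space the
type 'v (scalar multiplication scale), and r = CARD('r).  The vertex operator
is given by its modes: Y u m0 m v is the coefficient u_(m0,m) v of
x0^(-m0-1) x^(-m) in Y(u;x0,x)v.  The Jacobi identity is stated via its
coefficient of z0^(-p-1) x0^(-s-1) y0^(-t-1) z^(-m) y^(-m-n) applied to w,
the delta functions being expanded as usual (binomial expansion in the
second variable).\<close>

text \<open>Generalised binomial coefficient (p choose k) for an integer p; the
division is exact.\<close>
definition int_binom :: "int \<Rightarrow> nat \<Rightarrow> int" where
  "int_binom p k = (\<Prod>i<k. p - int i) div fact k"

definition toroidal_VA ::
  "('k::field \<Rightarrow> 'v::ab_group_add \<Rightarrow> 'v) \<Rightarrow>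
   ('v \<Rightarrow> int \<Rightarrow> ('r::finite \<Rightarrow> int) \<Rightarrow> 'v \<Rightarrow> 'v) \<Rightarrow> 'v \<Rightarrow> bool" where
  "toroidal_VA scale Y one \<longleftrightarrow>
     vector_space scale \<and>
     (\<forall>u m0 m. Vector_Spaces.linear scale scale (Y u m0 m)) \<and>
     (\<forall>v m0 m. Vector_Spaces.linear scale scale (\<lambda>u. Y u m0 m v)) \<and>
     \<comment> \<open>Y(u;x0,x)v lies in V[[x1^(+-1),...,xr^(+-1)]]((x0))\<close>
     (\<forall>u v. \<exists>N. \<forall>m0\<ge>N. \<forall>m. Y u m0 m v = 0) \<and>
     \<comment> \<open>vacuum: Y(1;x0,x)v = v\<close>
     (\<forall>v m0 m. Y one m0 m v = (if m0 = -1 \<and> m = (\<lambda>_. 0) then v else 0)) \<and>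
     \<comment> \<open>creation: Y(v;x0,x)1 in V[[x0,x^(+-1)]]\<close>
     (\<forall>v m0 m. m0 \<ge> 0 \<longrightarrow> Y v m0 m one = 0) \<and>
     \<comment> \<open>Jacobi identity, componentwise\<close>
     (\<forall>u v w p s t m n.
        (\<Sum>j. scale (of_int (int_binom s j))
                 (Y (Y u (p + int j) m v) (s + t - int j) (\<lambda>i. m i + n i) w))
        = (\<Sum>i. scale (of_int ((-1) ^ i * int_binom p i))
                 (Y u (s + p - int i) m (Y v (t + int i) n w)))
          - scale (if even p then 1 else -1)
             (\<Sum>i. scale (of_int ((-1) ^ i * int_binom p i))
                 (Y v (t + p - int i) n (Y u (s + int i) m w))))"

definition tva_ideal ::
  "('k::field \<Rightarrow> 'v::ab_group_add \<Rightarrow> 'v) \<Rightarrow>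
   ('v \<Rightarrow> int \<Rightarrow> ('r::finite \<Rightarrow> int) \<Rightarrow> 'v \<Rightarrow> 'v) \<Rightarrow> 'v set \<Rightarrow> bool" where
  "tva_ideal scale Y I \<longleftrightarrow> module.subspace scale I \<and>
     (\<forall>u v m0 m. (u \<in> I \<or> v \<in> I) \<longrightarrow> Y u m0 m v \<in> I)"

definition tva_V0 ::
  "('k::field \<Rightarrow> 'v::ab_group_add \<Rightarrow> 'v) \<Rightarrow>
   ('v \<Rightarrow> int \<Rightarrow> ('r::finite \<Rightarrow> int) \<Rightarrow> 'v \<Rightarrow> 'v) \<Rightarrow> 'v \<Rightarrow> 'v set" where
  "tva_V0 scale Y one = module.span scale {Y v m0 m one | v m0 m. True}"

definition tva_K ::
  "('v \<Rightarrow> int \<Rightarrow> ('r::finite \<Rightarrow> int) \<Rightarrow> 'v \<Rightarrow> 'v) \<Rightarrow> 'v set \<Rightarrow> 'v set" where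
  "tva_K Y I = {v. \<forall>m0 m w. Y v m0 m w \<in> I}"

definition tva_R ::
  "('k::field \<Rightarrow> 'v::ab_group_add \<Rightarrow> 'v) \<Rightarrow>
   ('v \<Rightarrow> int \<Rightarrow> ('r::finite \<Rightarrow> int) \<Rightarrow> 'v \<Rightarrow> 'v) \<Rightarrow> 'v \<Rightarrow> 'v set \<Rightarrow> 'v set" where
  "tva_R scale Y one I = I \<inter> tva_V0 scale Y one"

definition tva_G ::
  "('k::field \<Rightarrow> 'v::ab_group_add \<Rightarrow> 'v) \<Rightarrow>
   ('v \<Rightarrow> int \<Rightarrow> ('r::finite \<Rightarrow> int) \<Rightarrow> 'v \<Rightarrow> 'v) \<Rightarrow> 'v set \<Rightarrow> 'v set" where
  "tva_G scale Y I0 = module.span scale {Y a m0 m v | a v m0 m. a \<in> I0}"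

end

theory Submission
  imports Defs
begin

text \<open>Two instances of the Jacobi identity with the vacuum as second argument carry the
argument.  First, u_(-1,m) 1 has the same (k,m)-modes as u, so every mode of an element
of K(I) is a mode of an element of R(I) and hence lies in G(R(I)).  Second, the maps
a \<mapsto> a_(-1,m) 1 are the projections of V^0 onto its \<int>^r-graded pieces, so every
a \<in> V^0 is the finite sum of the vectors a_(-1,m) 1; for a \<in> K(I) these lie in I,
whence V^0 \<inter> K(I) \<subseteq> I for every subspace I.\<close>

lemma int_binom_0_right [simp]: "int_binom p 0 = 1"
  by (simp add: int_binom_def)

lemma int_binom_0_left: "j > 0 \<Longrightarrow> int_binom 0 j = 0"
  by (simp add: int_binom_def prod_zero)

context vector_space
begin

lemma scale_Sum_any: "scale c (\<Sum>a. g a) = (\<Sum>a. scale c (g a))"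
proof (cases "c = 0")
  case False
  then have "{a. scale c (g a) \<noteq> 0} = {a. g a \<noteq> 0}"
    by auto
  then show ?thesis
    by (simp add: Sum_any.expand_set scale_sum_right)
qed simp

lemma subspace_Sum_any: "subspace S \<Longrightarrow> (\<And>a. g a \<in> S) \<Longrightarrow> (\<Sum>a. g a) \<in> S"
  unfolding Sum_any.expand_set by (rule subspace_sum)

end

locale toroidal_vertex_algebra =
  fixes scale :: "'k::field \<Rightarrow> 'v::ab_group_add \<Rightarrow> 'v"
    and Y :: "'v \<Rightarrow> int \<Rightarrow> ('r::finite \<Rightarrow> int) \<Rightarrow> 'v \<Rightarrow> 'v"
    and one :: 'v
  assumes toroidal_VA: "toroidal_VA scale Y one"
begin

sublocale vector_space scale
  using toroidal_VA unfolding toroidal_VA_def by blast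

lemma linear_mode: "Vector_Spaces.linear scale scale (Y u m0 m)"
  and linear_mode_left: "Vector_Spaces.linear scale scale (\<lambda>u. Y u m0 m v)"
  and vacuum_mode: "Y one m0 m v = (if m0 = -1 \<and> m = (\<lambda>_. 0) then v else 0)"
  and creation: "m0 \<ge> 0 \<Longrightarrow> Y v m0 m one = 0"
  and jacobi:
    "(\<Sum>j. scale (of_int (int_binom s j))
             (Y (Y u (p + int j) m v) (s + t - int j) (\<lambda>i. m i + n i) w))
     = (\<Sum>i. scale (of_int ((-1) ^ i * int_binom p i))
             (Y u (s + p - int i) m (Y v (t + int i) n w)))
       - scale (if even p then 1 else -1)
           (\<Sum>i. scale (of_int ((-1) ^ i * int_binom p i))
             (Y v (t + p - int i) n (Y u (s + int i) m w)))"
  using toroidal_VA unfolding toroidal_VA_def by auto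

lemma mode_zero_left [simp]: "Y 0 m0 m v = 0"
  using module_hom.zero[OF linear_mode_left[unfolded linear_iff_module_hom]] .

lemma mode_zero_right [simp]: "Y u m0 m 0 = 0"
  using module_hom.zero[OF linear_mode[unfolded linear_iff_module_hom]] .

lemma mode_add_left: "Y (u + u') m0 m v = Y u m0 m v + Y u' m0 m v"
  using module_hom.add[OF linear_mode_left[unfolded linear_iff_module_hom]] .

lemma mode_scale_left: "Y (scale c u) m0 m v = scale c (Y u m0 m v)"
  using module_hom.scale[OF linear_mode_left[unfolded linear_iff_module_hom]] .

lemma modes_of_minus_one_vacuum_mode:
  "Y (Y u (-1) m one) k m w = Y u k m w"
proof -
  have lhs: "scale (of_int (int_binom (k+1) j))
               (Y (Y u (-1 + int j) m one) (k + 1 + -1 - int j) (\<lambda>i. m i + 0) w)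
             = (if j = 0 then Y (Y u (-1) m one) k m w else 0)" for j
    by (auto simp: creation)
  have rhs_first: "scale (of_int ((-1) ^ i * int_binom (-1) i))
                     (Y u (k + 1 + -1 - int i) m (Y one (-1 + int i) (\<lambda>_. 0) w))
                   = (if i = 0 then Y u k m w else 0)" for i
    by (auto simp: vacuum_mode)
  have rhs_second: "scale (of_int ((-1) ^ i * int_binom (-1) i))
                      (Y one (-1 + -1 - int i) (\<lambda>_. 0) (Y u (k + 1 + int i) m w)) = 0" for i
    by (auto simp: vacuum_mode)
  show ?thesis
    using jacobi[of "k+1" u "-1" m one "-1" "\<lambda>_. 0" w]
    unfolding lhs rhs_first rhs_second by simp
qed

lemma minus_one_vacuum_mode_of_vacuum_mode:
  "Y (Y a k m one) (-1) m' one = (if m' = m then Y a k m one else 0)"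
proof -
  define n where "n = (\<lambda>i. m' i - m i)"
  have m'_eq: "(\<lambda>i. m i + n i) = m'" and n_eq_0: "(n = (\<lambda>_. 0)) = (m' = m)"
    by (auto simp: n_def fun_eq_iff)
  have lhs: "scale (of_int (int_binom 0 j))
               (Y (Y a (k + int j) m one) (0 + -1 - int j) (\<lambda>i. m i + n i) one)
             = (if j = 0 then Y (Y a k m one) (-1) m' one else 0)" for j
    by (auto simp: int_binom_0_left m'_eq)
  have rhs_first: "scale (of_int ((-1) ^ i * int_binom k i))
                     (Y a (0 + k - int i) m (Y one (-1 + int i) n one))
                   = (if i = 0 then (if m' = m then Y a k m one else 0) else 0)" for i
    by (auto simp: vacuum_mode n_eq_0)
  have rhs_second: "scale (of_int ((-1) ^ i * int_binom k i))
                      (Y one (-1 + k - int i) n (Y a (0 + int i) m one)) = 0" for i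
    by (auto simp: creation)
  show ?thesis
    using jacobi[of 0 a k m one "-1" n one]
    unfolding lhs rhs_first rhs_second by simp
qed

lemma V0_graded_decomposition:
  assumes "v \<in> tva_V0 scale Y one"
  shows "finite {m. Y v (-1) m one \<noteq> 0} \<and> (\<Sum>m. Y v (-1) m one) = v" (is "?P v")
  using assms unfolding tva_V0_def
proof (induction rule: span_induct)
  case (step x)
  then obtain a k m where "x = Y a k m one"
    by blast
  then have "{m'. Y x (-1) m' one \<noteq> 0} \<subseteq> {m}" and "(\<Sum>m'. Y x (-1) m' one) = x"
    by (auto simp: minus_one_vacuum_mode_of_vacuum_mode)
  then show ?case
    using finite_subset by blast
next
  case base
  show ?case
  proof (rule subspaceI)
    fix x y
    assume "x \<in> Collect ?P" "y \<in> Collect ?P"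
    moreover have "{m. Y (x + y) (-1) m one \<noteq> 0}
                   \<subseteq> {m. Y x (-1) m one \<noteq> 0} \<union> {m. Y y (-1) m one \<noteq> 0}"
      by (auto simp: mode_add_left)
    ultimately show "x + y \<in> Collect ?P"
      by (auto simp: mode_add_left Sum_any.distrib intro: finite_subset)
  next
    fix c x
    assume "x \<in> Collect ?P"
    moreover have "{m. Y (scale c x) (-1) m one \<noteq> 0} \<subseteq> {m. Y x (-1) m one \<noteq> 0}"
      by (auto simp: mode_scale_left)
    ultimately show "scale c x \<in> Collect ?P"
      by (auto simp: mode_scale_left scale_Sum_any[symmetric] intro: finite_subset)
  qed simp
qed

lemma V0_inter_K_subset:
  assumes "subspace I"
  shows "tva_V0 scale Y one \<inter> tva_K Y I \<subseteq> I"
proof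
  fix v
  assume "v \<in> tva_V0 scale Y one \<inter> tva_K Y I"
  then have "(\<Sum>m. Y v (-1) m one) = v" and "\<And>m. Y v (-1) m one \<in> I"
    using V0_graded_decomposition unfolding tva_K_def by blast+
  then show "v \<in> I"
    using subspace_Sum_any[OF assms] by metis
qed

lemma K_subset_K_G_R: "tva_K Y I \<subseteq> tva_K Y (tva_G scale Y (tva_R scale Y one I))"
proof (unfold tva_K_def, intro subsetI CollectI allI)
  fix v k m w
  assume "v \<in> {v. \<forall>m0 m w. Y v m0 m w \<in> I}"
  then have "Y v (-1) m one \<in> tva_R scale Y one I"
    unfolding tva_R_def tva_V0_def by (auto intro: span_base)
  then have "Y (Y v (-1) m one) k m w \<in> tva_G scale Y (tva_R scale Y one I)"
    unfolding tva_G_def by (intro span_base) blast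
  then show "Y v k m w \<in> tva_G scale Y (tva_R scale Y one I)"
    by (simp only: modes_of_minus_one_vacuum_mode)
qed

lemma G_subset_ideal: "tva_ideal scale Y I \<Longrightarrow> I0 \<subseteq> I \<Longrightarrow> tva_G scale Y I0 \<subseteq> I"
  unfolding tva_ideal_def tva_G_def by (intro span_minimal) auto

lemma ideal_subset_K: "tva_ideal scale Y I \<Longrightarrow> I \<subseteq> tva_K Y I"
  unfolding tva_ideal_def tva_K_def by blast

end

theorem proposition2p21:
  fixes scale :: "'k::field \<Rightarrow> 'v::ab_group_add \<Rightarrow> 'v"
    and Y :: "'v \<Rightarrow> int \<Rightarrow> ('r::finite \<Rightarrow> int) \<Rightarrow> 'v \<Rightarrow> 'v"
    and one :: 'v
    and I :: "'v set"
  assumes "toroidal_VA scale Y one"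
    and "tva_ideal scale Y I"
  shows "tva_K Y (tva_G scale Y (tva_R scale Y one I)) = tva_K Y I
       \<and> tva_R scale Y one I = tva_R scale Y one (tva_K Y I)"
proof -
  interpret toroidal_vertex_algebra scale Y one
    by unfold_locales (fact assms(1))
  have "tva_G scale Y (tva_R scale Y one I) \<subseteq> I"
    using assms(2) by (rule G_subset_ideal) (simp add: tva_R_def)
  then have "tva_K Y (tva_G scale Y (tva_R scale Y one I)) \<subseteq> tva_K Y I"
    unfolding tva_K_def by blast
  moreover have "tva_R scale Y one I \<subseteq> tva_R scale Y one (tva_K Y I)"
    using ideal_subset_K[OF assms(2)] unfolding tva_R_def by blast
  moreover have "tva_R scale Y one (tva_K Y I) \<subseteq> tva_R scale Y one I"
    using V0_inter_K_subset assms(2) unfolding tva_R_def tva_ideal_def by blast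
  ultimately show ?thesis
    using K_subset_K_G_R by blast
qed

end
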